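(* Let $A\in\mathbb Z^{m\times n}$, let $d\in\mathbb N_+$ with $d\leq\min(m,n)$, and let $(K,D,L)$ be a Smith normal form for $A$. If there exists $V\in\mathbb Z^{m\times d}$ whose columns lie in $\operatorname{span}_{\mathbb Z}(A)$ and such that the $\mathbb Z$-span of the columns of $V^T$ is $\mathbb Z^d$, then $\textnormal{1-count}(D)\geq d$.
   Context: A Smith normal form of $A\in\mathbb Z^{m\times n}$ is a triple $(K,D,L)$ with $A=KDL$, $K\in\mathrm{GL}(m,\mathbb Z)$, $L\in\mathrm{GL}(n,\mathbb Z)$, and $D\in\mathbb Z^{m\times n}$ zero except for positive diagonal entries $\mathfrak d_1,\dots,\mathfrak d_r$ in the top-left positions with $\mathfrak d_i\mid\mathfrak d_{i+1}$. $\textnormal{1-count}(D)$ is the number of diagonal entries of $D$ equal to $1$. $\operatorname{span}_{\mathbb Z}(M)$ is the set of integer linear combinations of the columns of $M$. *)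

theory Defs
  imports "Jordan_Normal_Form.Matrix"
begin

definition int_col_span :: "int mat \<Rightarrow> int vec set" where
  "int_col_span M = {mult_mat_vec M x | x. x \<in> carrier_vec (dim_col M)}"

definition smith_diag :: "nat \<Rightarrow> nat \<Rightarrow> int mat \<Rightarrow> bool" where
  "smith_diag m n D \<longleftrightarrow> D \<in> carrier_mat m n \<and>
     (\<exists>r \<le> min m n.
        (\<forall>i<m. \<forall>j<n. (i \<noteq> j \<or> r \<le> i) \<longrightarrow> D $$ (i, j) = 0) \<and>
        (\<forall>i<r. D $$ (i, i) > 0) \<and>
        (\<forall>i. i + 1 < r \<longrightarrow> D $$ (i, i) dvd D $$ (i + 1, i + 1)))"

definition is_smith_nf :: "int mat \<Rightarrow> int mat \<Rightarrow> int mat \<Rightarrow> int mat \<Rightarrow> bool" where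
  "is_smith_nf A K D L \<longleftrightarrow>
     K \<in> carrier_mat (dim_row A) (dim_row A) \<and> invertible_mat K \<and>
     L \<in> carrier_mat (dim_col A) (dim_col A) \<and> invertible_mat L \<and>
     smith_diag (dim_row A) (dim_col A) D \<and>
     A = K * D * L"

definition one_count :: "int mat \<Rightarrow> nat" where
  "one_count D = card {i. i < min (dim_row D) (dim_col D) \<and> D $$ (i, i) = 1}"

end

theory Submission
  imports Defs "Jordan_Normal_Form.Determinant"
begin

(*
  Suppose fewer than d diagonal entries of D equal 1, and let g = D(s,s), s < d, be the
  first one that does not. Writing V = A X and V^T Y = I_d gives I_d = P D Q with
  P = Y^T K and Q = L X. All later diagonal entries of D are multiples of g, so D is
  congruent modulo g to the partial identity J_s with s < d ones; hence
  det I_d = det (P J_s Q) = 0 (mod g), since P J_s Q factors through a singular d x d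
  matrix. So g divides 1, which is impossible for a nonnegative g other than 1.
*)

lemma det_mod_cong:
  fixes A B :: "'a :: euclidean_ring_cancel mat"
  assumes A: "A \<in> carrier_mat n n" and B: "B \<in> carrier_mat n n"
    and cong: "\<And>i j. i < n \<Longrightarrow> j < n \<Longrightarrow> A $$ (i, j) mod g = B $$ (i, j) mod g"
  shows "det A mod g = det B mod g"
proof -
  let ?term = "\<lambda>M p. signof p * (\<Prod>i = 0..<n. M $$ (i, p i))"
  have "?term A p mod g = ?term B p mod g" if p: "p permutes {0..<n}" for p
  proof -
    have "(\<Prod>i = 0..<n. A $$ (i, p i) mod g) = (\<Prod>i = 0..<n. B $$ (i, p i) mod g)"
      using cong permutes_in_image[OF p] by (intro prod.cong) auto
    from arg_cong[where f = "\<lambda>x. x mod g", OF this]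
    have "(\<Prod>i = 0..<n. A $$ (i, p i)) mod g = (\<Prod>i = 0..<n. B $$ (i, p i)) mod g"
      by (simp only: mod_prod_eq)
    then show ?thesis by (rule mod_mult_cong[OF refl])
  qed
  then have "(\<Sum>p | p permutes {0..<n}. ?term A p mod g) = (\<Sum>p | p permutes {0..<n}. ?term B p mod g)"
    by (intro sum.cong) auto
  from arg_cong[where f = "\<lambda>x. x mod g", OF this]
  have "(\<Sum>p | p permutes {0..<n}. ?term A p) mod g = (\<Sum>p | p permutes {0..<n}. ?term B p) mod g"
    by (simp only: mod_sum_eq)
  then show ?thesis
    by (simp only: det_def'[OF A] det_def'[OF B])
qed

lemma det_add_smult_mod:
  fixes A B :: "'a :: euclidean_ring_cancel mat"
  assumes A: "A \<in> carrier_mat n n" and B: "B \<in> carrier_mat n n"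
  shows "det (A + g \<cdot>\<^sub>m B) mod g = det A mod g"
  by (rule det_mod_cong[of _ n]) (use A B in auto)

lemma dvd_entries_imp_smult_mat:
  fixes A :: "'a :: semidom_divide mat"
  assumes A: "A \<in> carrier_mat m n" and dvd: "\<And>i j. i < m \<Longrightarrow> j < n \<Longrightarrow> g dvd A $$ (i, j)"
  shows "\<exists>R \<in> carrier_mat m n. A = g \<cdot>\<^sub>m R"
proof
  show "A = g \<cdot>\<^sub>m map_mat (\<lambda>x. x div g) A"
    using A dvd by (intro eq_matI) auto
qed (use A in simp)

definition partial_one_mat :: "nat \<Rightarrow> nat \<Rightarrow> nat \<Rightarrow> 'a :: zero_neq_one mat" where
  "partial_one_mat m n s = mat m n (\<lambda>(i, j). if i = j \<and> i < s then 1 else 0)"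

lemma dim_partial_one_mat [simp]:
  "dim_row (partial_one_mat m n s) = m" "dim_col (partial_one_mat m n s) = n"
  by (simp_all add: partial_one_mat_def)

lemma partial_one_mat_carrier [simp]: "partial_one_mat m n s \<in> carrier_mat m n"
  by (simp add: carrier_matI)

lemma index_partial_one_mat [simp]:
  "i < m \<Longrightarrow> j < n \<Longrightarrow> partial_one_mat m n s $$ (i, j) = (if i = j \<and> i < s then 1 else 0)"
  by (simp add: partial_one_mat_def)

lemma partial_one_mat_mult:
  assumes "s \<le> k"
  shows "partial_one_mat m k s * partial_one_mat k n s = (partial_one_mat m n s :: 'a :: semiring_1 mat)"
proof (rule eq_matI)
  fix i j assume "i < dim_row (partial_one_mat m n s :: 'a mat)"
    and "j < dim_col (partial_one_mat m n s :: 'a mat)"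
  then have i: "i < m" and j: "j < n" by simp_all
  have "(partial_one_mat m k s * partial_one_mat k n s) $$ (i, j) =
      (\<Sum>l = 0..<k. partial_one_mat m k s $$ (i, l) * partial_one_mat k n s $$ (l, j) :: 'a)"
    using i j by (simp add: scalar_prod_def)
  also have "\<dots> = (\<Sum>l = 0..<k. if l = i then (if i = j \<and> i < s then 1 else 0) else 0)"
    using i j by (intro sum.cong) auto
  also have "\<dots> = partial_one_mat m n s $$ (i, j)"
    using i j assms by simp
  finally show "(partial_one_mat m k s * partial_one_mat k n s) $$ (i, j) =
      (partial_one_mat m n s $$ (i, j) :: 'a)" .
qed auto

lemma det_partial_one_mat:
  assumes "s < n"
  shows "det (partial_one_mat n n s :: 'a :: comm_ring_1 mat) = 0"
proof -
  have "upper_triangular (partial_one_mat n n s :: 'a mat)"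
    by (simp add: upper_triangular_def)
  then have "det (partial_one_mat n n s :: 'a mat) = (\<Prod>i = 0..<n. partial_one_mat n n s $$ (i, i))"
    by (simp add: det_upper_triangular[of _ n] prod_list_diag_prod)
  also have "\<dots> = 0"
    using assms by (intro prod_zero bexI[of _ "n - 1"]) auto
  finally show ?thesis .
qed

lemma det_mult_partial_one_mat:
  fixes P Q :: "'a :: comm_ring_1 mat"
  assumes P: "P \<in> carrier_mat d m" and Q: "Q \<in> carrier_mat n d" and "s < d"
  shows "det (P * partial_one_mat m n s * Q) = 0"
proof -
  let ?E = "partial_one_mat m d s :: 'a mat" and ?F = "partial_one_mat d n s :: 'a mat"
    and ?G = "partial_one_mat d d s :: 'a mat"
  have E: "?E \<in> carrier_mat m d" and F: "?F \<in> carrier_mat d n" and G: "?G \<in> carrier_mat d d"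
    by simp_all
  have "?G * (?F * Q) = ?G * ?F * Q"
    by (rule assoc_mult_mat[OF G F Q, symmetric])
  also have "\<dots> = ?F * Q"
    using \<open>s < d\<close> by (simp add: partial_one_mat_mult)
  finally have "det (?F * Q) = det ?G * det (?F * Q)"
    using det_mult[OF G mult_carrier_mat[OF F Q]] by simp
  then have FQ: "det (?F * Q) = 0"
    using \<open>s < d\<close> by (simp add: det_partial_one_mat)
  have "P * partial_one_mat m n s * Q = P * (?E * ?F) * Q"
    using \<open>s < d\<close> by (simp add: partial_one_mat_mult)
  also have "\<dots> = P * ?E * ?F * Q"
    by (simp only: assoc_mult_mat[OF P E F])
  also have "\<dots> = P * ?E * (?F * Q)"
    by (rule assoc_mult_mat[OF mult_carrier_mat[OF P E] F Q])
  finally show ?thesis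
    by (simp add: det_mult[OF mult_carrier_mat[OF P E] mult_carrier_mat[OF F Q]] FQ)
qed

lemma smith_diag_diag_nonneg:
  assumes "smith_diag m n D" and "i < m" and "i < n"
  shows "0 \<le> D $$ (i, i)"
proof -
  obtain r where "\<forall>i<m. \<forall>j<n. (i \<noteq> j \<or> r \<le> i) \<longrightarrow> D $$ (i, j) = 0"
    and "\<forall>i<r. D $$ (i, i) > 0"
    using assms(1) unfolding smith_diag_def by blast
  with assms(2,3) show ?thesis
    by (cases "i < r") (auto simp: less_imp_le)
qed

lemma smith_diag_diag_dvd:
  assumes D: "smith_diag m n D" and "i \<le> j" and "j < m" and "j < n"
  shows "D $$ (i, i) dvd D $$ (j, j)"
proof -
  obtain r where zero: "\<forall>i<m. \<forall>j<n. (i \<noteq> j \<or> r \<le> i) \<longrightarrow> D $$ (i, j) = 0"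
    and chain: "\<forall>i. i + 1 < r \<longrightarrow> D $$ (i, i) dvd D $$ (i + 1, i + 1)"
    using D unfolding smith_diag_def by blast
  show ?thesis
  proof (cases "j < r")
    case True
    from \<open>i \<le> j\<close> show ?thesis
    proof (induction j rule: dec_induct)
      case (step k)
      have "D $$ (k, k) dvd D $$ (Suc k, Suc k)"
        using chain[rule_format, of k] \<open>k < j\<close> True by simp
      with step.IH show ?case
        by (rule dvd_trans)
    qed simp
  next
    case False
    then show ?thesis
      using zero \<open>j < m\<close> \<open>j < n\<close> by simp
  qed
qed

lemma smith_diag_eq_partial_one_mat_plus_smult:
  assumes D: "smith_diag m n D" and "s < m" and "s < n"
    and ones: "\<And>i. i < s \<Longrightarrow> D $$ (i, i) = 1"
  shows "\<exists>R \<in> carrier_mat m n. D = partial_one_mat m n s + D $$ (s, s) \<cdot>\<^sub>m R"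
proof -
  have Dc: "D \<in> carrier_mat m n"
    using D unfolding smith_diag_def by blast
  have off_diag: "D $$ (i, j) = 0" if "i < m" "j < n" "i \<noteq> j" for i j
    using D that unfolding smith_diag_def by blast
  have "D $$ (s, s) dvd (D - partial_one_mat m n s) $$ (i, j)" if "i < m" "j < n" for i j
    using that Dc off_diag[of i j] ones[of i] smith_diag_diag_dvd[OF D, of s i]
    by (cases "i = j") (auto simp: not_less)
  then obtain R where R: "R \<in> carrier_mat m n"
    and "D - partial_one_mat m n s = D $$ (s, s) \<cdot>\<^sub>m R"
    using dvd_entries_imp_smult_mat[OF minus_carrier_mat[OF partial_one_mat_carrier]] by blast
  then have "D = partial_one_mat m n s + D $$ (s, s) \<cdot>\<^sub>m R"
    using Dc by (intro eq_matI) (auto simp: mat_eq_iff diff_eq_eq add.commute)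
  with R show ?thesis by blast
qed

lemma one_count_ge_leading_ones:
  assumes "D \<in> carrier_mat m n" and "d \<le> min m n" and "\<And>i. i < d \<Longrightarrow> D $$ (i, i) = 1"
  shows "d \<le> one_count D"
proof -
  have "{..<d} \<subseteq> {i. i < min (dim_row D) (dim_col D) \<and> D $$ (i, i) = 1}"
    using assms by auto
  from card_mono[OF _ this] show ?thesis
    unfolding one_count_def by simp
qed

lemma smith_diag_one_count_ge:
  assumes D: "smith_diag m n D" and "d \<le> min m n"
    and P: "P \<in> carrier_mat d m" and Q: "Q \<in> carrier_mat n d"
    and PDQ: "P * D * Q = 1\<^sub>m d"
  shows "d \<le> one_count D"
proof (rule ccontr)
  assume "\<not> d \<le> one_count D"
  moreover have Dc: "D \<in> carrier_mat m n"
    using D unfolding smith_diag_def by blast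
  ultimately have "\<exists>i. i < d \<and> D $$ (i, i) \<noteq> 1"
    using one_count_ge_leading_ones \<open>d \<le> min m n\<close> by blast
  then obtain s where "s < d" and not_one: "D $$ (s, s) \<noteq> 1"
    and ones: "\<And>i. i < s \<Longrightarrow> D $$ (i, i) = 1"
    unfolding exists_least_iff[of "\<lambda>i. i < d \<and> D $$ (i, i) \<noteq> 1"] by auto
  define g where "g = D $$ (s, s)"
  let ?J = "partial_one_mat m n s :: int mat"
  have "s < m" "s < n"
    using \<open>s < d\<close> \<open>d \<le> min m n\<close> by simp_all
  then obtain R where R: "R \<in> carrier_mat m n" and DJR: "D = ?J + g \<cdot>\<^sub>m R"
    using smith_diag_eq_partial_one_mat_plus_smult[OF D _ _ ones] unfolding g_def by blast
  have J: "?J \<in> carrier_mat m n"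
    by simp
  have "1\<^sub>m d = (P * ?J + P * (g \<cdot>\<^sub>m R)) * Q"
    using PDQ mult_add_distrib_mat[OF P J smult_carrier_mat[OF R]] unfolding DJR by simp
  also have "\<dots> = P * ?J * Q + g \<cdot>\<^sub>m (P * R * Q)"
    using P Q R mult_smult_assoc_mat[OF mult_carrier_mat[OF P R] Q]
    by (simp add: add_mult_distrib_mat[of _ d n] mult_smult_distrib)
  finally have "1\<^sub>m d = P * ?J * Q + g \<cdot>\<^sub>m (P * R * Q)" .
  then have "det (1\<^sub>m d) mod g = det (P * ?J * Q) mod g"
    using det_add_smult_mod[OF mult_carrier_mat[OF mult_carrier_mat[OF P partial_one_mat_carrier] Q]
        mult_carrier_mat[OF mult_carrier_mat[OF P R] Q]] by simp
  then have "g dvd 1"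
    using det_mult_partial_one_mat[OF P Q \<open>s < d\<close>] by (simp add: dvd_eq_mod_eq_0)
  moreover have "0 \<le> g"
    using smith_diag_diag_nonneg[OF D \<open>s < m\<close> \<open>s < n\<close>] unfolding g_def .
  ultimately show False
    using not_one unfolding g_def by simp
qed

lemma cols_in_int_col_span_imp_factor:
  assumes A: "A \<in> carrier_mat m n" and V: "V \<in> carrier_mat m d"
    and span: "\<forall>j<d. col V j \<in> int_col_span A"
  shows "\<exists>X \<in> carrier_mat n d. V = A * X"
proof -
  have "\<forall>j<d. \<exists>x. x \<in> carrier_vec n \<and> col V j = A *\<^sub>v x"
    using span A unfolding int_col_span_def by auto
  then obtain x where x: "\<And>j. j < d \<Longrightarrow> x j \<in> carrier_vec n \<and> col V j = A *\<^sub>v x j"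
    by metis
  let ?X = "mat_of_cols n (map x [0..<d])"
  have "V = A * ?X"
  proof (rule mat_col_eqI)
    fix j assume "j < dim_col (A * ?X)"
    then have "j < d" by simp
    then show "col V j = col (A * ?X) j"
      using x[of j] col_mult2[OF A mat_of_cols_carrier(1)] by simp
  qed (use A V in simp_all)
  then show ?thesis
    using mat_of_cols_carrier(1)[of n "map x [0..<d]"] by auto
qed

theorem corollary6p12:
  fixes A K D L V :: "int mat" and m n d :: nat
  assumes "A \<in> carrier_mat m n"
    and "0 < d" and "d \<le> min m n"
    and "is_smith_nf A K D L"
    and "V \<in> carrier_mat m d"
    and "\<forall>j<d. col V j \<in> int_col_span A"
    and "int_col_span (transpose_mat V) = carrier_vec d"
  shows "one_count D \<ge> d"
proof -
  have K: "K \<in> carrier_mat m m" and L: "L \<in> carrier_mat n n" and D: "smith_diag m n D"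
    and A: "A = K * D * L"
    using assms(1,4) unfolding is_smith_nf_def by auto
  have Dc: "D \<in> carrier_mat m n"
    using D unfolding smith_diag_def by blast
  obtain X where X: "X \<in> carrier_mat n d" and VAX: "V = A * X"
    using cols_in_int_col_span_imp_factor assms(1,5,6) by blast
  have VT: "transpose_mat V \<in> carrier_mat d m"
    using assms(5) by simp
  have "\<forall>j<d. col (1\<^sub>m d) j \<in> int_col_span (transpose_mat V)"
    using assms(7) by simp
  then obtain Y where Y: "Y \<in> carrier_mat m d" and VY: "1\<^sub>m d = transpose_mat V * Y"
    using cols_in_int_col_span_imp_factor[OF VT one_carrier_mat] by blast
  have YT: "transpose_mat Y \<in> carrier_mat d m"
    using Y by simp
  have "1\<^sub>m d = transpose_mat Y * V"
    using arg_cong[OF VY, of transpose_mat] transpose_mult[OF _ Y, of "transpose_mat V"] assms(5)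
    by simp
  also have "\<dots> = transpose_mat Y * (K * D * (L * X))"
    unfolding VAX A by (simp only: assoc_mult_mat[OF mult_carrier_mat[OF K Dc] L X])
  also have "\<dots> = transpose_mat Y * (K * D) * (L * X)"
    by (rule assoc_mult_mat[OF YT mult_carrier_mat[OF K Dc] mult_carrier_mat[OF L X], symmetric])
  also have "\<dots> = transpose_mat Y * K * D * (L * X)"
    by (simp only: assoc_mult_mat[OF YT K Dc])
  finally show ?thesis
    using smith_diag_one_count_ge[OF D \<open>d \<le> min m n\<close> mult_carrier_mat[OF YT K] mult_carrier_mat[OF L X]]
    by simp
qed

end
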